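(* Fix $\lambda\ge 0$ and let $V(\cdot;\lambda):\mathcal{A}\times\mathcal{H}\to\mathbb{R}$ be such that, for every $h\in\mathcal{H}$, $V((A_l,A_r),h;\lambda)$ is non-decreasing in $A_l$ and in $A_r$ (e.g. a solution of the Bellman equation with this property). Define $J$ and $\Delta J_{\mathbf{w},\mathbf{w}'}$ from this $V$. Then for every $h\in\mathcal{H}$: (A) $\Delta J_{(0,0),(1,0)}(\mathbf{A},h;\lambda)$ is non-decreasing in $A_l$ (for fixed $A_r$), and $\Delta J_{(0,0),\mathbf{w}'}(\mathbf{A},h;\lambda)$ is non-decreasing in $A_r$ (for fixed $A_l$) for $\mathbf{w}'\in\{(0,1),(1,1)\}$; (B) for $\mathbf{w}\in\{(0,1),(1,1)\}$ and every $\mathbf{w}'\in\mathcal{W}$ with $\mathbf{w}'\ne\mathbf{w}$, $\Delta J_{\mathbf{w},\mathbf{w}'}(\mathbf{A},h;\lambda)$ is non-increasing in $A_r$ (for fixed $A_l$); (C) for every $\mathbf{w}'\in\mathcal{W}$ with $\mathbf{w}'\ne(1,0)$, $\Delta J_{(1,0),\mathbf{w}'}(\mathbf{A},h;\lambda)$ is non-increasing in $A_l$ (for fixed $A_r$).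
   Context: Single IoT device model. Fix integers $\hat A_l,\hat A_r\ge 1$ and let $\mathcal{A}_l=\{1,\dots,\hat A_l\}$, $\mathcal{A}_r=\{1,\dots,\hat A_r\}$, $\mathcal{A}=\mathcal{A}_l\times\mathcal{A}_r$, with elements $\mathbf{A}=(A_l,A_r)$. Let $\mathcal{H}\subset(0,\infty)$ be a finite set of channel states with probability mass function $p_{\mathcal{H}}$. The action set is $\mathcal{W}=\{0,1\}\times\{0,1\}$, with actions $\mathbf{w}=(s,u)$. Let $C_s\ge 0$ and $C_u:\mathcal{H}\to[0,\infty)$ decreasing; the energy cost is $C(\mathbf{w},h)=sC_s+uC_u(h)$. Under action $\mathbf{w}=(s,u)$ at AoI state $\mathbf{A}=(A_l,A_r)$, the next AoI state $\mathbf{A}'=(A_l',A_r')$ is $A_l'=1$ if $s=1$ and $A_l'=\min\{A_l+1,\hat A_l\}$ if $s=0$; $A_r'=\min\{A_l+1,\hat A_r\}$ if $u=1$ and $A_r'=\min\{A_r+1,\hat A_r\}$ if $u=0$. The Lagrange cost is $L(\mathbf{A},h,\mathbf{w};\lambda)=A_r+\lambda C(\mathbf{w},h)$. Given $V$, the state-action Lagrange cost is $J(\mathbf{A},h,\mathbf{w};\lambda)=L(\mathbf{A},h,\mathbf{w};\lambda)+\sum_{h'\in\mathcal{H}}p_{\mathcal{H}}(h')V(\mathbf{A}',h';\lambda)$ with $\mathbf{A}'$ the next AoI state under $\mathbf{w}$, and $\Delta J_{\mathbf{w},\mathbf{w}'}(\mathbf{A},h;\lambda)=J(\mathbf{A},h,\mathbf{w};\lambda)-J(\mathbf{A},h,\mathbf{w}';\lambda)$.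 *)

theory Defs
  imports Complex_Main
begin

text \<open>The Lagrange multiplier lambda is fixed, so V and J
do not carry it as an explicit argument dependence beyond the parameter lam.\<close>

definition AoI_set :: "nat \<Rightarrow> nat \<Rightarrow> (nat \<times> nat) set" where
  "AoI_set Alh Arh = {1..Alh} \<times> {1..Arh}"

definition W_set :: "(nat \<times> nat) set" where
  "W_set = {0,1} \<times> {0,1}"

definition next_AoI :: "nat \<Rightarrow> nat \<Rightarrow> nat \<times> nat \<Rightarrow> nat \<times> nat \<Rightarrow> nat \<times> nat" where
  "next_AoI Alh Arh A w =
     (let (Al, Ar) = A; (s, u) = w in
       (if s = 1 then 1 else min (Al + 1) Alh,
        if u = 1 then min (Al + 1) Arh else min (Ar + 1) Arh))"

definition energy_cost :: "real \<Rightarrow> (real \<Rightarrow> real) \<Rightarrow> nat \<times> nat \<Rightarrow> real \<Rightarrow> real" where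
  "energy_cost Cs Cu w h = real (fst w) * Cs + real (snd w) * Cu h"

definition lagrange_cost ::
  "real \<Rightarrow> (real \<Rightarrow> real) \<Rightarrow> nat \<times> nat \<Rightarrow> real \<Rightarrow> nat \<times> nat \<Rightarrow> real \<Rightarrow> real" where
  "lagrange_cost Cs Cu A h w lam = real (snd A) + lam * energy_cost Cs Cu w h"

definition J_cost ::
  "nat \<Rightarrow> nat \<Rightarrow> real set \<Rightarrow> (real \<Rightarrow> real) \<Rightarrow> real \<Rightarrow> (real \<Rightarrow> real)
   \<Rightarrow> (nat \<times> nat \<Rightarrow> real \<Rightarrow> real) \<Rightarrow> nat \<times> nat \<Rightarrow> real \<Rightarrow> nat \<times> nat \<Rightarrow> real \<Rightarrow> real" where
  "J_cost Alh Arh H p Cs Cu V A h w lam =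
     lagrange_cost Cs Cu A h w lam + (\<Sum>h'\<in>H. p h' * V (next_AoI Alh Arh A w) h')"

definition DeltaJ ::
  "nat \<Rightarrow> nat \<Rightarrow> real set \<Rightarrow> (real \<Rightarrow> real) \<Rightarrow> real \<Rightarrow> (real \<Rightarrow> real)
   \<Rightarrow> (nat \<times> nat \<Rightarrow> real \<Rightarrow> real) \<Rightarrow> nat \<times> nat \<Rightarrow> nat \<times> nat \<Rightarrow> nat \<times> nat \<Rightarrow> real \<Rightarrow> real \<Rightarrow> real" where
  "DeltaJ Alh Arh H p Cs Cu V w w' A h lam =
     J_cost Alh Arh H p Cs Cu V A h w lam - J_cost Alh Arh H p Cs Cu V A h w' lam"

end

theory Submission
  imports Defs "HOL-Library.Product_Order"
begin

text \<open>Only the expected continuation value \<open>\<Sum>h'. p h' V(A', h')\<close> depends on the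
AoI state, so comparing \<open>\<Delta>J(w,w')\<close> at two states amounts to comparing expected
values at the next states. In each case of the claim the next state under one of the
two actions does not depend on the coordinate being varied, whereas the next state
under the other action is monotone in the AoI state; monotonicity of \<open>V\<close> then fixes
the sign.\<close>

lemma next_AoI_mono: "mono (\<lambda>A. next_AoI Alh Arh A w)"
  by (rule monoI) (auto simp: next_AoI_def less_eq_prod_def split: prod.splits)

lemma next_AoI_in_AoI_set:
  assumes "Alh \<ge> 1" "Arh \<ge> 1"
  shows "next_AoI Alh Arh A w \<in> AoI_set Alh Arh"
  using assms by (auto simp: next_AoI_def AoI_set_def split: prod.splits)

lemma next_AoI_sample_only_indep_Al:
  "next_AoI Alh Arh (Al, Ar) (1, 0) = next_AoI Alh Arh (Al', Ar) (1, 0)"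
  by (simp add: next_AoI_def)

lemma next_AoI_update_indep_Ar:
  "next_AoI Alh Arh (Al, Ar) (s, 1) = next_AoI Alh Arh (Al, Ar') (s, 1)"
  by (simp add: next_AoI_def)

lemma mono_on_AoI_setI:
  fixes f :: "nat \<times> nat \<Rightarrow> 'a::order"
  assumes mono_l: "\<forall>Al\<in>{1..Alh}. \<forall>Al'\<in>{1..Alh}. \<forall>Ar\<in>{1..Arh}. Al \<le> Al' \<longrightarrow> f (Al, Ar) \<le> f (Al', Ar)"
    and mono_r: "\<forall>Al\<in>{1..Alh}. \<forall>Ar\<in>{1..Arh}. \<forall>Ar'\<in>{1..Arh}. Ar \<le> Ar' \<longrightarrow> f (Al, Ar) \<le> f (Al, Ar')"
  shows "mono_on (AoI_set Alh Arh) f"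
proof (rule mono_onI)
  fix A A' assume "A \<in> AoI_set Alh Arh" "A' \<in> AoI_set Alh Arh" "A \<le> A'"
  then obtain Al Ar Al' Ar' where A: "A = (Al, Ar)" "A' = (Al', Ar')"
    and box: "Al \<in> {1..Alh}" "Al' \<in> {1..Alh}" "Ar \<in> {1..Arh}" "Ar' \<in> {1..Arh}"
    and le: "Al \<le> Al'" "Ar \<le> Ar'"
    by (cases A, cases A') (auto simp: AoI_set_def less_eq_prod_def)
  have "f (Al, Ar) \<le> f (Al', Ar)" using mono_l box le by blast
  also have "\<dots> \<le> f (Al', Ar')" using mono_r box le by blast
  finally show "f A \<le> f A'" by (simp add: A)
qed

lemma expected_value_mono_on:
  fixes p :: "'h \<Rightarrow> real" and V :: "'s::order \<Rightarrow> 'h \<Rightarrow> real"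
  assumes "\<forall>h\<in>H. p h \<ge> 0" and "\<forall>h\<in>H. mono_on S (\<lambda>A. V A h)"
  shows "mono_on S (\<lambda>A. \<Sum>h\<in>H. p h * V A h)"
proof (rule mono_onI)
  fix A A' assume "A \<in> S" "A' \<in> S" "A \<le> A'"
  then show "(\<Sum>h\<in>H. p h * V A h) \<le> (\<Sum>h\<in>H. p h * V A' h)"
    using assms by (intro sum_mono mult_left_mono) (auto elim: mono_onD)
qed

lemma DeltaJ_eq:
  "DeltaJ Alh Arh H p Cs Cu V w w' A h lam =
     lam * (energy_cost Cs Cu w h - energy_cost Cs Cu w' h)
     + (\<Sum>h'\<in>H. p h' * V (next_AoI Alh Arh A w) h')
     - (\<Sum>h'\<in>H. p h' * V (next_AoI Alh Arh A w') h')"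
  unfolding DeltaJ_def J_cost_def lagrange_cost_def by (simp add: algebra_simps)

lemma DeltaJ_antimono_if_next_fixed:
  assumes "Alh \<ge> 1" "Arh \<ge> 1" and "\<forall>h\<in>H. p h \<ge> 0"
    and "\<forall>h\<in>H. mono_on (AoI_set Alh Arh) (\<lambda>A. V A h)"
    and "next_AoI Alh Arh A w = next_AoI Alh Arh A' w" and "A \<le> A'"
  shows "DeltaJ Alh Arh H p Cs Cu V w w' A' h lam \<le> DeltaJ Alh Arh H p Cs Cu V w w' A h lam"
proof -
  have "(\<Sum>h'\<in>H. p h' * V (next_AoI Alh Arh A w') h')
      \<le> (\<Sum>h'\<in>H. p h' * V (next_AoI Alh Arh A' w') h')"
    by (rule mono_onD[OF expected_value_mono_on[OF assms(3,4)]]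
        next_AoI_in_AoI_set[OF assms(1,2)] monoD[OF next_AoI_mono \<open>A \<le> A'\<close>])+
  then show ?thesis
    unfolding DeltaJ_eq \<open>next_AoI Alh Arh A w = next_AoI Alh Arh A' w\<close> by simp
qed

lemma DeltaJ_mono_if_next_fixed:
  assumes "Alh \<ge> 1" "Arh \<ge> 1" and "\<forall>h\<in>H. p h \<ge> 0"
    and "\<forall>h\<in>H. mono_on (AoI_set Alh Arh) (\<lambda>A. V A h)"
    and "next_AoI Alh Arh A w' = next_AoI Alh Arh A' w'" and "A \<le> A'"
  shows "DeltaJ Alh Arh H p Cs Cu V w w' A h lam \<le> DeltaJ Alh Arh H p Cs Cu V w w' A' h lam"
  using DeltaJ_antimono_if_next_fixed[OF assms, where w'=w and Cs=Cs and Cu=Cu and h=h and lam=lam]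
  unfolding DeltaJ_def by simp

theorem lemma4:
  fixes Alh Arh :: nat and H :: "real set" and p :: "real \<Rightarrow> real"
    and Cs :: real and Cu :: "real \<Rightarrow> real" and lam :: real
    and V :: "nat \<times> nat \<Rightarrow> real \<Rightarrow> real"
  assumes "Alh \<ge> 1" and "Arh \<ge> 1"
    and "finite H" and "H \<subseteq> {0<..}"
    and "\<forall>h\<in>H. p h \<ge> 0" and "(\<Sum>h\<in>H. p h) = 1"
    and "Cs \<ge> 0"
    and "\<forall>h\<in>H. Cu h \<ge> 0"
    and "\<forall>h\<in>H. \<forall>h'\<in>H. h \<le> h' \<longrightarrow> Cu h' \<le> Cu h"
    and "lam \<ge> 0"
    and V_mono_l: "\<forall>h\<in>H. \<forall>Al\<in>{1..Alh}. \<forall>Al'\<in>{1..Alh}. \<forall>Ar\<in>{1..Arh}.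
                     Al \<le> Al' \<longrightarrow> V (Al, Ar) h \<le> V (Al', Ar) h"
    and V_mono_r: "\<forall>h\<in>H. \<forall>Al\<in>{1..Alh}. \<forall>Ar\<in>{1..Arh}. \<forall>Ar'\<in>{1..Arh}.
                     Ar \<le> Ar' \<longrightarrow> V (Al, Ar) h \<le> V (Al, Ar') h"
  shows "\<forall>h\<in>H.
    \<comment> \<open>(A)\<close>
    (\<forall>Al\<in>{1..Alh}. \<forall>Al'\<in>{1..Alh}. \<forall>Ar\<in>{1..Arh}. Al \<le> Al' \<longrightarrow>
        DeltaJ Alh Arh H p Cs Cu V (0,0) (1,0) (Al, Ar) h lam
          \<le> DeltaJ Alh Arh H p Cs Cu V (0,0) (1,0) (Al', Ar) h lam) \<and>
    (\<forall>w'\<in>{(0,1),(1,1)}. \<forall>Al\<in>{1..Alh}. \<forall>Ar\<in>{1..Arh}. \<forall>Ar'\<in>{1..Arh}. Ar \<le> Ar' \<longrightarrow>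
        DeltaJ Alh Arh H p Cs Cu V (0,0) w' (Al, Ar) h lam
          \<le> DeltaJ Alh Arh H p Cs Cu V (0,0) w' (Al, Ar') h lam) \<and>
    \<comment> \<open>(B)\<close>
    (\<forall>w\<in>{(0,1),(1,1)}. \<forall>w'\<in>W_set. w' \<noteq> w \<longrightarrow>
      (\<forall>Al\<in>{1..Alh}. \<forall>Ar\<in>{1..Arh}. \<forall>Ar'\<in>{1..Arh}. Ar \<le> Ar' \<longrightarrow>
        DeltaJ Alh Arh H p Cs Cu V w w' (Al, Ar') h lam
          \<le> DeltaJ Alh Arh H p Cs Cu V w w' (Al, Ar) h lam)) \<and>
    \<comment> \<open>(C)\<close>
    (\<forall>w'\<in>W_set. w' \<noteq> (1,0) \<longrightarrow>
      (\<forall>Al\<in>{1..Alh}. \<forall>Al'\<in>{1..Alh}. \<forall>Ar\<in>{1..Arh}. Al \<le> Al' \<longrightarrow>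
        DeltaJ Alh Arh H p Cs Cu V (1,0) w' (Al', Ar) h lam
          \<le> DeltaJ Alh Arh H p Cs Cu V (1,0) w' (Al, Ar) h lam))"
proof -
  have V_mono: "\<forall>h\<in>H. mono_on (AoI_set Alh Arh) (\<lambda>A. V A h)"
    using V_mono_l V_mono_r by (auto intro: mono_on_AoI_setI)
  note mono = DeltaJ_mono_if_next_fixed[OF assms(1,2,5) V_mono]
  note antimono = DeltaJ_antimono_if_next_fixed[OF assms(1,2,5) V_mono]
  have le_l: "(Al, Ar) \<le> (Al', Ar)" if "Al \<le> Al'" for Al Al' Ar :: nat
    using that by (simp add: less_eq_prod_def)
  have le_r: "(Al, Ar) \<le> (Al, Ar')" if "Ar \<le> Ar'" for Al Ar Ar' :: nat
    using that by (simp add: less_eq_prod_def)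
  have update_indep_Ar: "next_AoI Alh Arh (Al, Ar) w = next_AoI Alh Arh (Al, Ar') w"
    if "w \<in> {(0,1),(1,1)}" for w Al Ar Ar'
    using that next_AoI_update_indep_Ar by auto
  show ?thesis
    by (intro ballI conjI impI allI mono antimono le_l le_r update_indep_Ar
        next_AoI_sample_only_indep_Al) auto
qed

end
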